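(* There exist full amicable orthogonal designs $AOD\big(16;\ 2,2,2,10;\ 2,2,2,10\big)$ and $AOD\big(24;\ 2,2,2,18;\ 2,2,2,18\big)$. Consequently, for every integer $n>4$ there exists a full $$AOD\Big(2^n;\ 2^{n-3}_{(3)},\,10,\,10,\,5\cdot2^2,\ldots,5\cdot2^{n-4};\ 2^{n-3}_{(3)},\,5\cdot2^{n-3}\Big),$$ and for every integer $n>3$ there exists a full $$AOD\Big(3\cdot2^n;\ 2^{n-2}_{(3)},\,18,\,18,\,9\cdot2^2,\ldots,9\cdot2^{n-3};\ 2^{n-2}_{(3)},\,9\cdot2^{n-2}\Big).$$ (In the first type the entries after $10,10$ are $5\cdot 2^j$ for $j=2,\ldots,n-4$, and analogously for the second.)
   Context: The notation $u_{(k)}$ in a type means that $u$ is repeated $k$ times. An orthogonal design $OD(m;c_1,\ldots,c_k)$ is an $m\times m$ matrix $X$ with entries from $\{0,\pm x_1,\ldots,\pm x_k\}$, where $x_1,\ldots,x_k$ are commuting indeterminates, such that $XX^{\rm T}=(\sum_j c_jx_j^2)I_m$. An amicable orthogonal design $AOD(m;c_1,\ldots,c_k;d_1,\ldots,d_\ell)$ is a pair $(X;Y)$ where $X$ is an $OD(m;c_1,\ldots,c_k)$ in indeterminates $x_1,\ldots,x_k$, $Y$ is an $OD(m;d_1,\ldots,d_\ell)$ in indeterminates $y_1,\ldots,y_\ell$ disjoint from the $x_i$, and $XY^{\rm T}=YX^{\rm T}$. It is full if neither $X$ nor $Y$ has a zero entry. *)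

theory Defs
  imports Complex_Main
begin

text \<open>A design of order m in k indeterminates is encoded as a function
  D :: nat => nat => int * nat; the entry (i,j) (for i,j < m) is
  fst (D i j) * x_(snd (D i j)), where fst (D i j) is in {-1,0,1} and
  snd (D i j) < k. Indeterminates are indexed from 0.\<close>

type_synonym design = "nat \<Rightarrow> nat \<Rightarrow> int \<times> nat"

definition wf_design :: "nat \<Rightarrow> nat \<Rightarrow> design \<Rightarrow> bool" where
  "wf_design m k D \<longleftrightarrow>
     (\<forall>i<m. \<forall>j<m. fst (D i j) \<in> {-1, 0, 1} \<and> snd (D i j) < k)"

definition dval :: "design \<Rightarrow> (nat \<Rightarrow> real) \<Rightarrow> nat \<Rightarrow> nat \<Rightarrow> real" where
  "dval D x i j = real_of_int (fst (D i j)) * x (snd (D i j))"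

text \<open>Orthogonal design OD(m; c_1,...,c_k): X X^T = (sum c_j x_j^2) I_m as a polynomial
  identity in the commuting indeterminates (equivalently, for all real values).\<close>
definition is_OD :: "nat \<Rightarrow> nat list \<Rightarrow> design \<Rightarrow> bool" where
  "is_OD m cs X \<longleftrightarrow> wf_design m (length cs) X \<and>
     (\<forall>x. \<forall>i<m. \<forall>j<m.
        (\<Sum>l<m. dval X x i l * dval X x j l) =
        (if i = j then (\<Sum>t<length cs. real (cs ! t) * (x t)\<^sup>2) else 0))"

text \<open>Amicable orthogonal design AOD(m; cs; ds): X in indeterminates x, Y in disjoint
  indeterminates y, with X Y^T = Y X^T.\<close>
definition is_AOD :: "nat \<Rightarrow> nat list \<Rightarrow> nat list \<Rightarrow> design \<Rightarrow> design \<Rightarrow> bool" where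
  "is_AOD m cs ds X Y \<longleftrightarrow> is_OD m cs X \<and> is_OD m ds Y \<and>
     (\<forall>x y. \<forall>i<m. \<forall>j<m.
        (\<Sum>l<m. dval X x i l * dval Y y j l) = (\<Sum>l<m. dval Y y i l * dval X x j l))"

definition full_design :: "nat \<Rightarrow> design \<Rightarrow> bool" where
  "full_design m D \<longleftrightarrow> (\<forall>i<m. \<forall>j<m. fst (D i j) \<noteq> 0)"

definition exists_full_AOD :: "nat \<Rightarrow> nat list \<Rightarrow> nat list \<Rightarrow> bool" where
  "exists_full_AOD m cs ds \<longleftrightarrow>
     (\<exists>X Y. is_AOD m cs ds X Y \<and> full_design m X \<and> full_design m Y)"

end

theory Submission
  imports Defs
begin

text \<open>Both small designs are obtained from explicit \<open>8 \<times> 8\<close> and \<open>12 \<times> 12\<close> integer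
  matrices whose nonzero entries \<open>\<plusminus>v\<close> stand for \<open>\<plusminus>x\<^bsub>v-1\<^esub>\<close>, by replacing every variable with
  the variable times one of four \<open>2 \<times> 2\<close> sign matrices, chosen so that the blocks used in \<open>X\<close>
  and in \<open>Y\<close> fit together. Expanding \<open>X X\<^sup>T\<close> and \<open>X Y\<^sup>T\<close> as bilinear forms reduces all
  defining identities to finitely many integer identities, which are checked by evaluation.

  For the two infinite families write a full \<open>AOD(m; c, c, c, w; c, c, c, w)\<close> as \<open>X = A + x\<^sub>3 M\<close>.
  Comparing coefficients of \<open>x\<^sub>3\<close> in \<open>X X\<^sup>T\<close> gives \<open>A A\<^sup>T = c(x\<^sub>0\<^sup>2 + x\<^sub>1\<^sup>2 + x\<^sub>2\<^sup>2) I\<close>,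
  \<open>M M\<^sup>T = w I\<close> and \<open>A M\<^sup>T + M A\<^sup>T = 0\<close>. Let \<open>H\<close> be the Sylvester Hadamard matrix of order
  \<open>2\<^sup>k\<close> and \<open>D\<close> the full \<open>OD(2\<^sup>k; 1, 1, 2, \<dots>, 2\<^sup>k\<^sup>-\<^sup>1)\<close> in fresh variables satisfying
  \<open>H D\<^sup>T = D H\<^sup>T\<close>. Then \<open>A \<otimes> H + M \<otimes> D\<close> and \<open>Y \<otimes> H\<close> form a full AOD of order \<open>2\<^sup>k m\<close>: the
  cross terms of the first product are \<open>(A M\<^sup>T + M A\<^sup>T) \<otimes> H D\<^sup>T = 0\<close>, and amicability
  reduces to that of \<open>A\<close> and \<open>M\<close> with \<open>Y\<close>. Starting from the designs of orders 16 and 24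
  gives the two families.\<close>

section \<open>Row products as bilinear forms\<close>

lemma sum_lessThan_mult_split:
  fixes f :: "nat \<Rightarrow> 'a::comm_monoid_add"
  shows "(\<Sum>l<a * m. f l) = (\<Sum>q<a. \<Sum>r<m. f (q * m + r))"
proof -
  have "(\<Sum>l<a * m. f l) = (\<Sum>q<a. sum f {q * m..<q * m + m})"
    using sum.nat_group[of f m a] by simp
  also have "\<dots> = (\<Sum>q<a. \<Sum>r<m. f (q * m + r))"
  proof (rule sum.cong [OF refl])
    fix q
    show "sum f {q * m..<q * m + m} = (\<Sum>r<m. f (q * m + r))"
      using sum.shift_bounds_nat_ivl[of f 0 "q * m" m]
      by (simp add: atLeast0LessThan add.commute)
  qed
  finally show ?thesis .
qed

lemma nat_eq_iff_div_mod: "(i::nat) = j \<longleftrightarrow> i div m = j div m \<and> i mod m = j mod m"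
  by (metis div_mult_mod_eq)

definition bilinear_coeff :: "design \<Rightarrow> design \<Rightarrow> nat \<Rightarrow> nat \<Rightarrow> nat \<Rightarrow> nat \<Rightarrow> nat \<Rightarrow> int" where
  "bilinear_coeff X Y m i j a b =
     (\<Sum>l<m. if snd (X i l) = a \<and> snd (Y j l) = b then fst (X i l) * fst (Y j l) else 0)"

lemma row_product_eq_bilinear_form:
  assumes "wf_design m k X" "wf_design m k' Y" "i < m" "j < m"
  shows "(\<Sum>l<m. dval X x i l * dval Y y j l) =
    (\<Sum>a<k. \<Sum>b<k'. of_int (bilinear_coeff X Y m i j a b) * x a * y b)"
proof -
  let ?t = "\<lambda>l a b. if snd (X i l) = a \<and> snd (Y j l) = b
      then of_int (fst (X i l) * fst (Y j l)) * x a * y b else 0 :: real"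
  have "(\<Sum>a<k. \<Sum>b<k'. of_int (bilinear_coeff X Y m i j a b) * x a * y b) =
      (\<Sum>a<k. \<Sum>b<k'. \<Sum>l<m. ?t l a b)"
    unfolding bilinear_coeff_def of_int_sum sum_distrib_right
    by (intro sum.cong refl) auto
  also have "\<dots> = (\<Sum>a<k. \<Sum>l<m. \<Sum>b<k'. ?t l a b)"
    by (rule sum.cong [OF refl], rule sum.swap)
  also have "\<dots> = (\<Sum>l<m. \<Sum>a<k. \<Sum>b<k'. ?t l a b)"
    by (rule sum.swap)
  also have "\<dots> = (\<Sum>l<m. dval X x i l * dval Y y j l)"
  proof (rule sum.cong [OF refl])
    fix l assume "l \<in> {..<m}"
    then have a: "snd (X i l) < k" and b: "snd (Y j l) < k'"
      using assms unfolding wf_design_def by auto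
    have "(\<Sum>a<k. \<Sum>b<k'. ?t l a b) =
        (\<Sum>a<k. if snd (X i l) = a then of_int (fst (X i l) * fst (Y j l)) * x a * y (snd (Y j l)) else 0)"
      using b by (intro sum.cong refl) simp
    also have "\<dots> = dval X x i l * dval Y y j l"
      using a by (simp add: dval_def)
    finally show "(\<Sum>a<k. \<Sum>b<k'. ?t l a b) = dval X x i l * dval Y y j l" .
  qed
  finally show ?thesis by simp
qed

text \<open>Since \<open>X X\<^sup>T\<close> is symmetric, only the symmetrised coefficients
  \<open>[x\<^sub>a x\<^sub>b] + [x\<^sub>b x\<^sub>a]\<close> are determined by the quadratic form.\<close>

lemma is_OD_if_bilinear_coeffs:
  assumes wf: "wf_design m (length cs) X"
    and coeffs: "\<And>i j a b. i < m \<Longrightarrow> j < m \<Longrightarrow> a < length cs \<Longrightarrow> b < length cs \<Longrightarrow>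
      bilinear_coeff X X m i j a b + bilinear_coeff X X m i j b a =
      (if i = j \<and> a = b then 2 * int (cs ! a) else 0)"
  shows "is_OD m cs X"
  unfolding is_OD_def
proof (intro conjI allI impI wf)
  fix x :: "nat \<Rightarrow> real" and i j assume i: "i < m" and j: "j < m"
  let ?k = "length cs"
  let ?c = "\<lambda>a b. real_of_int (bilinear_coeff X X m i j a b)"
  let ?Q = "\<Sum>a<?k. \<Sum>b<?k. ?c a b * x a * x b"
  have swapped: "?Q = (\<Sum>a<?k. \<Sum>b<?k. ?c b a * x a * x b)"
    by (subst sum.swap) (simp add: mult_ac)
  have sym: "?c a b + ?c b a = (if i = j \<and> a = b then 2 * real (cs ! a) else 0)"
    if "a < ?k" "b < ?k" for a b
    using arg_cong[OF coeffs[OF i j that], of real_of_int] by simp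
  have "2 * ?Q = ?Q + (\<Sum>a<?k. \<Sum>b<?k. ?c b a * x a * x b)"
    using swapped by simp
  also have "\<dots> = (\<Sum>a<?k. \<Sum>b<?k. (?c a b + ?c b a) * x a * x b)"
    by (simp add: sum.distrib[symmetric] distrib_right)
  also have "\<dots> = (\<Sum>a<?k. \<Sum>b<?k. if i = j \<and> a = b then 2 * real (cs ! a) * x a * x b else 0)"
    by (intro sum.cong refl) (simp add: sym)
  also have "\<dots> = (if i = j then 2 * (\<Sum>t<?k. real (cs ! t) * (x t)\<^sup>2) else 0)"
    by (simp add: sum.delta' sum_distrib_left power2_eq_square mult_ac)
  finally show "(\<Sum>l<m. dval X x i l * dval X x j l) =
      (if i = j then (\<Sum>t<?k. real (cs ! t) * (x t)\<^sup>2) else 0)"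
    using row_product_eq_bilinear_form[OF wf wf i j] by (simp split: if_splits)
qed

lemma amicable_if_bilinear_coeffs:
  assumes "wf_design m k X" "wf_design m k' Y" "i < m" "j < m"
    and "\<And>a b. a < k \<Longrightarrow> b < k' \<Longrightarrow> bilinear_coeff X Y m i j a b = bilinear_coeff X Y m j i a b"
  shows "(\<Sum>l<m. dval X x i l * dval Y y j l) = (\<Sum>l<m. dval Y y i l * dval X x j l)"
proof -
  have "(\<Sum>l<m. dval Y y i l * dval X x j l) = (\<Sum>l<m. dval X x j l * dval Y y i l)"
    by (simp add: mult.commute)
  then show ?thesis
    using assms by (simp add: row_product_eq_bilinear_form)
qed

section \<open>Doubling by \<open>2 \<times> 2\<close> sign blocks\<close>

definition sign_block :: "nat \<Rightarrow> nat \<Rightarrow> nat \<Rightarrow> int" where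
  "sign_block v c d = [[[1,1],[1,-1]], [[1,-1],[1,1]], [[1,1],[-1,1]], [[-1,1],[1,1]]] ! v ! c ! d"

definition sign_block_inner :: "nat \<Rightarrow> nat \<Rightarrow> nat \<Rightarrow> nat \<Rightarrow> int" where
  "sign_block_inner v v' c c' = sign_block v c 0 * sign_block v' c' 0 + sign_block v c 1 * sign_block v' c' 1"

text \<open>Every entry \<open>\<plusminus>x\<^sub>v\<close> of \<open>B\<close> becomes the \<open>2 \<times> 2\<close> block \<open>\<plusminus>x\<^sub>v S\<^bsub>blk v\<^esub>\<close>,
  where \<open>S\<^sub>0, \<dots>, S\<^sub>3\<close> are the sign matrices of \<open>sign_block\<close>.\<close>

definition double_design :: "design \<Rightarrow> (nat \<Rightarrow> nat) \<Rightarrow> design" where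
  "double_design B blk i j =
     (fst (B (i div 2) (j div 2)) * sign_block (blk (snd (B (i div 2) (j div 2)))) (i mod 2) (j mod 2),
      snd (B (i div 2) (j div 2)))"

lemma bilinear_coeff_double_design:
  "bilinear_coeff (double_design X bx) (double_design Y bY) (2 * m) i j a b =
   bilinear_coeff X Y m (i div 2) (j div 2) a b * sign_block_inner (bx a) (bY b) (i mod 2) (j mod 2)"
proof -
  let ?i = "i div 2" and ?j = "j div 2" and ?g = "sign_block_inner (bx a) (bY b) (i mod 2) (j mod 2)"
  let ?t = "\<lambda>l. if snd (double_design X bx i l) = a \<and> snd (double_design Y bY j l) = b
      then fst (double_design X bx i l) * fst (double_design Y bY j l) else 0"
  have pair: "(\<Sum>d<2. ?t (r * 2 + d)) =
      (if snd (X ?i r) = a \<and> snd (Y ?j r) = b then fst (X ?i r) * fst (Y ?j r) * ?g else 0)" for r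
  proof -
    have eX: "double_design X bx i (r * 2 + d) =
        (fst (X ?i r) * sign_block (bx (snd (X ?i r))) (i mod 2) d, snd (X ?i r))"
      and eY: "double_design Y bY j (r * 2 + d) =
        (fst (Y ?j r) * sign_block (bY (snd (Y ?j r))) (j mod 2) d, snd (Y ?j r))"
      if "d < 2" for d
      using that unfolding double_design_def by simp_all
    have sum2: "(\<Sum>d<2. f d) = f 0 + f 1" for f :: "nat \<Rightarrow> int"
      by (simp add: numeral_2_eq_2)
    show ?thesis
      unfolding sum2 using eX[of 0] eX[of 1] eY[of 0] eY[of 1]
      by (auto simp: sign_block_inner_def algebra_simps)
  qed
  have "bilinear_coeff (double_design X bx) (double_design Y bY) (2 * m) i j a b =
      (\<Sum>r<m. \<Sum>d<2. ?t (r * 2 + d))"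
    unfolding bilinear_coeff_def using sum_lessThan_mult_split[of _ m 2] by (simp add: mult.commute)
  also have "\<dots> = bilinear_coeff X Y m ?i ?j a b * ?g"
    unfolding pair bilinear_coeff_def sum_distrib_right by (rule sum.cong) auto
  finally show ?thesis .
qed

lemma sign_block_pm1: "v < 4 \<Longrightarrow> c < 2 \<Longrightarrow> d < 2 \<Longrightarrow> sign_block v c d \<in> {-1, 1}"
  by (auto simp: sign_block_def less_Suc_eq numeral_eq_Suc)

lemma double_design_wf:
  assumes "wf_design m k B" "full_design m B" "\<And>v. blk v < 4"
  shows "wf_design (2 * m) k (double_design B blk)" "full_design (2 * m) (double_design B blk)"
proof -
  have "fst (B (i div 2) (j div 2)) \<in> {-1, 1} \<and> snd (B (i div 2) (j div 2)) < k \<and>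
      sign_block (blk (snd (B (i div 2) (j div 2)))) (i mod 2) (j mod 2) \<in> {-1, 1}"
    if "i < 2 * m" "j < 2 * m" for i j
    using assms that sign_block_pm1 unfolding wf_design_def full_design_def by auto
  then show "wf_design (2 * m) k (double_design B blk)" "full_design (2 * m) (double_design B blk)"
    unfolding wf_design_def full_design_def double_design_def by fastforce+
qed

definition design_of_matrix :: "int list list \<Rightarrow> design" where
  "design_of_matrix L i j = (sgn (L ! i ! j), nat \<bar>L ! i ! j\<bar> - 1)"

definition matrix_design_ok :: "nat \<Rightarrow> nat \<Rightarrow> int list list \<Rightarrow> bool" where
  "matrix_design_ok m k L \<longleftrightarrow> length L = m \<and>
     list_all (\<lambda>R. length R = m \<and> list_all (\<lambda>e. e \<noteq> 0 \<and> \<bar>e\<bar> \<le> int k) R) L"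

definition row_coeff :: "int list \<Rightarrow> int list \<Rightarrow> nat \<Rightarrow> nat \<Rightarrow> int" where
  "row_coeff R S a b = sum_list (map (\<lambda>(e, f).
     if nat \<bar>e\<bar> - 1 = a \<and> nat \<bar>f\<bar> - 1 = b then sgn e * sgn f else 0) (zip R S))"

lemma matrix_design_okD:
  assumes "matrix_design_ok m k L" "r < m"
  shows "length (L ! r) = m" and "l < m \<Longrightarrow> L ! r ! l \<noteq> 0 \<and> \<bar>L ! r ! l\<bar> \<le> int k"
  using assms unfolding matrix_design_ok_def list_all_length by auto

lemma design_of_matrix_wf:
  assumes "matrix_design_ok m k L"
  shows "wf_design m k (design_of_matrix L)" "full_design m (design_of_matrix L)"
proof -
  have entry: "fst (design_of_matrix L i j) \<in> {-1, 0, 1} \<and> fst (design_of_matrix L i j) \<noteq> 0 \<and>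
      snd (design_of_matrix L i j) < k"
    if "i < m" "j < m" for i j
    using matrix_design_okD(2)[OF assms that] by (auto simp: design_of_matrix_def sgn_if)
  show "wf_design m k (design_of_matrix L)" "full_design m (design_of_matrix L)"
    unfolding wf_design_def full_design_def using entry by blast+
qed

lemma row_coeff_eq_bilinear_coeff:
  assumes "matrix_design_ok m k L" "matrix_design_ok m k' L'" "r < m" "r' < m"
  shows "row_coeff (L ! r) (L' ! r') a b =
    bilinear_coeff (design_of_matrix L) (design_of_matrix L') m r r' a b"
  using matrix_design_okD(1)[OF assms(1,3)] matrix_design_okD(1)[OF assms(2,4)]
  unfolding row_coeff_def bilinear_coeff_def design_of_matrix_def fst_conv snd_conv
  by (simp add: sum_list_sum_nth lessThan_atLeast0)

definition OD_block_check :: "int \<Rightarrow> int \<Rightarrow> nat \<Rightarrow> nat \<Rightarrow> int \<Rightarrow> bool" where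
  "OD_block_check p q v v' t \<longleftrightarrow> list_all (\<lambda>(c, c').
     p * sign_block_inner v v' c c' + q * sign_block_inner v' v c c' = (if c = c' then t else 0))
     [(0, 0), (0, 1), (1, 0), (1, 1)]"

definition amicable_block_check :: "int \<Rightarrow> int \<Rightarrow> nat \<Rightarrow> nat \<Rightarrow> bool" where
  "amicable_block_check p q v v' \<longleftrightarrow> list_all (\<lambda>(c, c').
     p * sign_block_inner v v' c c' = q * sign_block_inner v v' c' c)
     [(0, 0), (0, 1), (1, 0), (1, 1)]"

definition doubled_OD_check :: "nat \<Rightarrow> nat list \<Rightarrow> int list list \<Rightarrow> (nat \<Rightarrow> nat) \<Rightarrow> bool" where
  "doubled_OD_check m cs L blk \<longleftrightarrow>
     list_all (\<lambda>r. list_all (\<lambda>r'. list_all (\<lambda>a. list_all (\<lambda>b.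
       OD_block_check (row_coeff (L ! r) (L ! r') a b) (row_coeff (L ! r) (L ! r') b a) (blk a) (blk b)
         (if r = r' \<and> a = b then 2 * int (cs ! a) else 0))
     [0..<length cs]) [0..<length cs]) [0..<m]) [0..<m]"

definition doubled_amicable_check ::
    "nat \<Rightarrow> nat \<Rightarrow> int list list \<Rightarrow> int list list \<Rightarrow> (nat \<Rightarrow> nat) \<Rightarrow> (nat \<Rightarrow> nat) \<Rightarrow> bool" where
  "doubled_amicable_check m k LX LY bx bY \<longleftrightarrow>
     list_all (\<lambda>r. list_all (\<lambda>r'. list_all (\<lambda>a. list_all (\<lambda>b.
       amicable_block_check (row_coeff (LX ! r) (LY ! r') a b) (row_coeff (LX ! r') (LY ! r) a b) (bx a) (bY b))
     [0..<k]) [0..<k]) [0..<m]) [0..<m]"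

lemma OD_block_checkD:
  assumes "OD_block_check p q v v' t" "c < 2" "c' < 2"
  shows "p * sign_block_inner v v' c c' + q * sign_block_inner v' v c c' = (if c = c' then t else 0)"
  using assms unfolding OD_block_check_def by (auto simp: less_Suc_eq numeral_2_eq_2)

lemma amicable_block_checkD:
  assumes "amicable_block_check p q v v'" "c < 2" "c' < 2"
  shows "p * sign_block_inner v v' c c' = q * sign_block_inner v v' c' c"
  using assms unfolding amicable_block_check_def by (auto simp: less_Suc_eq numeral_2_eq_2)

lemma is_OD_doubled_matrix:
  assumes ok: "matrix_design_ok m (length cs) L" and check: "doubled_OD_check m cs L blk"
    and blk: "\<And>v. blk v < 4"
  shows "is_OD (2 * m) cs (double_design (design_of_matrix L) blk)"
proof (rule is_OD_if_bilinear_coeffs)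
  let ?X = "double_design (design_of_matrix L) blk"
  show "wf_design (2 * m) (length cs) ?X"
    using double_design_wf design_of_matrix_wf[OF ok] blk by blast
  fix i j a b assume i: "i < 2 * m" and j: "j < 2 * m" and a: "a < length cs" and b: "b < length cs"
  have r: "i div 2 < m" "j div 2 < m" using i j by auto
  have "OD_block_check (row_coeff (L ! (i div 2)) (L ! (j div 2)) a b)
      (row_coeff (L ! (i div 2)) (L ! (j div 2)) b a) (blk a) (blk b)
      (if i div 2 = j div 2 \<and> a = b then 2 * int (cs ! a) else 0)"
    using check r a b unfolding doubled_OD_check_def list_all_iff by auto
  from OD_block_checkD[OF this, of "i mod 2" "j mod 2"]
  show "bilinear_coeff ?X ?X (2 * m) i j a b + bilinear_coeff ?X ?X (2 * m) i j b a =
      (if i = j \<and> a = b then 2 * int (cs ! a) else 0)"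
    using row_coeff_eq_bilinear_coeff[OF ok ok r]
    by (auto simp: bilinear_coeff_double_design nat_eq_iff_div_mod[of i j 2])
qed

lemma exists_full_AOD_doubled_matrices:
  assumes len: "length cs = k"
    and okX: "matrix_design_ok m k LX" and okY: "matrix_design_ok m k LY"
    and odX: "doubled_OD_check m cs LX bx" and odY: "doubled_OD_check m cs LY bY"
    and amicable: "doubled_amicable_check m k LX LY bx bY"
    and bx: "\<And>v. bx v < 4" and bY: "\<And>v. bY v < 4"
  shows "exists_full_AOD (2 * m) cs cs"
proof -
  note okX = okX[folded len] and okY = okY[folded len] and amicable = amicable[folded len]
  let ?X = "double_design (design_of_matrix LX) bx" and ?Y = "double_design (design_of_matrix LY) bY"
  note wfX = double_design_wf[where blk = bx, OF design_of_matrix_wf[OF okX] bx]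
  note wfY = double_design_wf[where blk = bY, OF design_of_matrix_wf[OF okY] bY]
  have "(\<Sum>l<2 * m. dval ?X x i l * dval ?Y y j l) = (\<Sum>l<2 * m. dval ?Y y i l * dval ?X x j l)"
    if i: "i < 2 * m" and j: "j < 2 * m" for x y i j
  proof (rule amicable_if_bilinear_coeffs[OF wfX(1) wfY(1) i j])
    fix a b assume a: "a < length cs" and b: "b < length cs"
    have r: "i div 2 < m" "j div 2 < m" using i j by auto
    have "amicable_block_check (row_coeff (LX ! (i div 2)) (LY ! (j div 2)) a b)
        (row_coeff (LX ! (j div 2)) (LY ! (i div 2)) a b) (bx a) (bY b)"
      using amicable r a b unfolding doubled_amicable_check_def list_all_iff by auto
    from amicable_block_checkD[OF this, of "i mod 2" "j mod 2"]
    show "bilinear_coeff ?X ?Y (2 * m) i j a b = bilinear_coeff ?X ?Y (2 * m) j i a b"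
      using row_coeff_eq_bilinear_coeff[OF okX okY r] row_coeff_eq_bilinear_coeff[OF okX okY r(2) r(1)]
      by (simp add: bilinear_coeff_double_design)
  qed
  then have "is_AOD (2 * m) cs cs ?X ?Y"
    unfolding is_AOD_def using is_OD_doubled_matrix okX okY odX odY bx bY by blast
  then show ?thesis
    unfolding exists_full_AOD_def using wfX(2) wfY(2) by blast
qed

section \<open>Full designs of orders 16 and 24\<close>

definition blocks_X :: "nat \<Rightarrow> nat" where
  "blocks_X v = (if v < 3 then 0 else 1)"

definition blocks_Y :: "nat \<Rightarrow> nat" where
  "blocks_Y v = (if v < 3 then 2 else 3)"

definition X8 :: "int list list" where
  "X8 =
    [[ 1,  2,  3,  4,  4,  4,  4,  4],
     [-2,  1, -4, -4, -4,  3,  4,  4],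
     [-3,  4,  1, -4,  4, -2, -4,  4],
     [-4,  4,  4,  1, -4,  4, -2, -3],
     [-4,  4, -4,  4,  1, -4,  3, -2],
     [-4, -3,  2, -4,  4,  1,  4, -4],
     [-4, -4,  4,  2, -3, -4,  1,  4],
     [-4, -4, -4,  3,  2,  4, -4,  1]]"

definition Y8 :: "int list list" where
  "Y8 =
    [[-2, -3, -1,  4,  4,  4,  4,  4],
     [-3,  2, -4, -4, -4, -1,  4,  4],
     [-1,  4,  2, -4,  4,  3, -4,  4],
     [-4,  4,  4,  3, -4,  4,  1, -2],
     [-4,  4, -4,  4,  3, -4, -2, -1],
     [-4, -1,  3, -4,  4, -2,  4, -4],
     [-4, -4,  4,  1, -2, -4, -3,  4],
     [-4, -4, -4, -2, -1,  4, -4, -3]]"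

definition X12 :: "int list list" where
  "X12 =
    [[ 1,  2,  3,  4,  4,  4,  4,  4,  4,  4,  4,  4],
     [-2,  1,  4,  4, -4,  4, -4, -4, -3, -4,  4,  4],
     [-3, -4,  1, -4, -4,  4,  4,  4,  2, -4,  4, -4],
     [-4, -4,  4,  1,  2, -4, -3, -4,  4,  4,  4, -4],
     [-4,  4,  4, -2,  1,  4, -4,  4, -4,  4, -3, -4],
     [-4, -4, -4,  4, -4,  1, -4,  4,  4,  2, -4,  3],
     [-4,  4, -4,  3,  4,  4,  1, -4,  4, -4, -2, -4],
     [-4,  4, -4,  4, -4, -4,  4,  1, -4,  3,  4, -2],
     [-4,  3, -2, -4,  4, -4, -4,  4,  1, -4,  4,  4],
     [-4,  4,  4, -4, -4, -2,  4, -3,  4,  1, -4,  4],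
     [-4, -4, -4, -4,  3,  4,  2, -4, -4,  4,  1,  4],
     [-4, -4,  4,  4,  4, -3,  4,  2, -4, -4, -4,  1]]"

definition Y12 :: "int list list" where
  "Y12 =
    [[ 3, -2,  1,  4,  4,  4,  4,  4,  4,  4,  4,  4],
     [-2, -3,  4,  4, -4,  4, -4, -4, -1, -4,  4,  4],
     [ 1, -4, -3, -4, -4,  4,  4,  4, -2, -4,  4, -4],
     [-4, -4,  4, -2, -1, -4,  3, -4,  4,  4,  4, -4],
     [-4,  4,  4, -1,  2,  4, -4,  4, -4,  4,  3, -4],
     [-4, -4, -4,  4, -4,  1, -4,  4,  4,  3, -4, -2],
     [-4,  4, -4,  3,  4,  4,  2, -4,  4, -4,  1, -4],
     [-4,  4, -4,  4, -4, -4,  4,  1, -4,  2,  4,  3],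
     [-4, -1, -2, -4,  4, -4, -4,  4,  3, -4,  4,  4],
     [-4,  4,  4, -4, -4,  3,  4,  2,  4, -1, -4,  4],
     [-4, -4, -4, -4,  3,  4,  1, -4, -4,  4, -2,  4],
     [-4, -4,  4,  4,  4, -2,  4,  3, -4, -4, -4, -1]]"

lemma exists_full_AOD_16: "exists_full_AOD 16 [2, 2, 2, 10] [2, 2, 2, 10]"
proof -
  have "matrix_design_ok 8 4 X8 \<and> matrix_design_ok 8 4 Y8 \<and>
      doubled_OD_check 8 [2, 2, 2, 10] X8 blocks_X \<and> doubled_OD_check 8 [2, 2, 2, 10] Y8 blocks_Y \<and>
      doubled_amicable_check 8 4 X8 Y8 blocks_X blocks_Y"
    by code_simp
  then show ?thesis
    using exists_full_AOD_doubled_matrices[of "[2, 2, 2, 10]" 4 8 X8 Y8 blocks_X blocks_Y]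
    by (simp add: blocks_X_def blocks_Y_def)
qed

lemma exists_full_AOD_24: "exists_full_AOD 24 [2, 2, 2, 18] [2, 2, 2, 18]"
proof -
  have "matrix_design_ok 12 4 X12 \<and> matrix_design_ok 12 4 Y12 \<and>
      doubled_OD_check 12 [2, 2, 2, 18] X12 blocks_X \<and> doubled_OD_check 12 [2, 2, 2, 18] Y12 blocks_Y \<and>
      doubled_amicable_check 12 4 X12 Y12 blocks_X blocks_Y"
    by code_simp
  then show ?thesis
    using exists_full_AOD_doubled_matrices[of "[2, 2, 2, 18]" 4 12 X12 Y12 blocks_X blocks_Y]
    by (simp add: blocks_X_def blocks_Y_def)
qed

section \<open>Sylvester matrices\<close>

lemma sum_lessThan_double:
  fixes f :: "nat \<Rightarrow> 'a::comm_monoid_add"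
  shows "(\<Sum>l<2 * n. f l) = (\<Sum>l<n. f l) + (\<Sum>l<n. f (l + n))"
proof -
  have "(\<Sum>l<2 * n. f l) = (\<Sum>l<n. f l) + (\<Sum>l\<in>{n..<n + n}. f l)"
    by (simp add: lessThan_atLeast0 sum.atLeastLessThan_concat mult_2)
  also have "(\<Sum>l\<in>{n..<n + n}. f l) = (\<Sum>l<n. f (l + n))"
    using sum.shift_bounds_nat_ivl[of f 0 n n] by (simp add: lessThan_atLeast0)
  finally show ?thesis .
qed

lemma less_2pow_Suc_cases:
  assumes "q < (2::nat)^Suc k"
  obtains "q < 2^k" | p where "q = p + 2^k" "p < 2^k"
  using assms by (metis add.commute le_add_diff_inverse less_diff_conv2 not_less power_Suc mult_2)

lemma less_2pow_Suc_pair_cases: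
  assumes "q < (2::nat)^Suc k" "q' < (2::nat)^Suc k"
  obtains "q < 2^k" "q' < 2^k"
    | p' where "q < 2^k" "q' = p' + 2^k" "p' < 2^k"
    | p where "q = p + 2^k" "p < 2^k" "q' < 2^k"
    | p p' where "q = p + 2^k" "p < 2^k" "q' = p' + 2^k" "p' < 2^k"
  using less_2pow_Suc_cases[OF assms(1)] less_2pow_Suc_cases[OF assms(2)] by metis

text \<open>The Sylvester matrices \<open>H\<^sub>0 = [1]\<close>, \<open>H\<^sub>k\<^sub>+\<^sub>1 = [[H\<^sub>k, H\<^sub>k], [H\<^sub>k, -H\<^sub>k]]\<close>, and
  the designs \<open>D\<^sub>0 = [z\<^sub>0]\<close>, \<open>D\<^sub>k\<^sub>+\<^sub>1 = [[D\<^sub>k, z\<^sub>k\<^sub>+\<^sub>1 H\<^sub>k], [-z\<^sub>k\<^sub>+\<^sub>1 H\<^sub>k, D\<^sub>k]]\<close>.\<close>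

fun sylvester :: "nat \<Rightarrow> nat \<Rightarrow> nat \<Rightarrow> int" where
  "sylvester 0 q l = 1"
| "sylvester (Suc k) q l =
     (if q < 2^k then (if l < 2^k then sylvester k q l else sylvester k q (l - 2^k))
      else (if l < 2^k then sylvester k (q - 2^k) l else - sylvester k (q - 2^k) (l - 2^k)))"

fun sylvester_od :: "nat \<Rightarrow> design" where
  "sylvester_od 0 q l = (1, 0)"
| "sylvester_od (Suc k) q l =
     (if q < 2^k then (if l < 2^k then sylvester_od k q l else (sylvester k q (l - 2^k), Suc k))
      else (if l < 2^k then (- sylvester k (q - 2^k) l, Suc k) else sylvester_od k (q - 2^k) (l - 2^k)))"

lemma sylvester_Suc_blocks:
  assumes "q < 2^k" "l < 2^k"
  shows "sylvester (Suc k) q l = sylvester k q l"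
    and "sylvester (Suc k) q (l + 2^k) = sylvester k q l"
    and "sylvester (Suc k) (q + 2^k) l = sylvester k q l"
    and "sylvester (Suc k) (q + 2^k) (l + 2^k) = - sylvester k q l"
  using assms by simp_all

lemma sylvester_od_Suc_blocks:
  assumes "q < 2^k" "l < 2^k"
  shows "dval (sylvester_od (Suc k)) z q l = dval (sylvester_od k) z q l"
    and "dval (sylvester_od (Suc k)) z q (l + 2^k) = z (Suc k) * of_int (sylvester k q l)"
    and "dval (sylvester_od (Suc k)) z (q + 2^k) l = - z (Suc k) * of_int (sylvester k q l)"
    and "dval (sylvester_od (Suc k)) z (q + 2^k) (l + 2^k) = dval (sylvester_od k) z q l"
  using assms by (simp_all add: dval_def)

lemmas sylvester_blocks = sylvester_Suc_blocks sylvester_od_Suc_blocks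

declare sylvester.simps(2) [simp del] sylvester_od.simps(2) [simp del]

lemma sylvester_orthogonal:
  assumes "q < 2^k" "q' < 2^k"
  shows "(\<Sum>l<2^k. of_int (sylvester k q l) * of_int (sylvester k q' l) :: real) =
    (if q = q' then 2^k else 0)"
  using assms
proof (induction k arbitrary: q q')
  case (Suc k)
  from Suc.prems show ?case
    by (cases rule: less_2pow_Suc_pair_cases)
      (use Suc.IH in \<open>simp_all add: sum_lessThan_double sylvester_blocks sum_negf\<close>)
qed simp

lemma sylvester_amicable:
  assumes "q < 2^k" "q' < 2^k"
  shows "(\<Sum>l<2^k. of_int (sylvester k q l) * dval (sylvester_od k) z q' l) =
    (\<Sum>l<2^k. of_int (sylvester k q' l) * dval (sylvester_od k) z q l)"
  using assms
proof (induction k arbitrary: q q')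
  case (Suc k)
  from Suc.prems show ?case
    by (cases rule: less_2pow_Suc_pair_cases)
      (use Suc.IH in \<open>simp_all add: sum_lessThan_double sylvester_blocks sum_negf mult_ac\<close>)
qed (simp add: dval_def)

definition sylvester_od_type :: "nat \<Rightarrow> nat list" where
  "sylvester_od_type k = 1 # map (\<lambda>t. 2^t) [0..<k]"

lemma sylvester_od_form_Suc:
  "(\<Sum>t<length (sylvester_od_type (Suc k)). real (sylvester_od_type (Suc k) ! t) * (z t)\<^sup>2) =
   (\<Sum>t<length (sylvester_od_type k). real (sylvester_od_type k ! t) * (z t)\<^sup>2) + 2^k * (z (Suc k))\<^sup>2"
proof -
  have type_Suc: "sylvester_od_type (Suc k) = sylvester_od_type k @ [2^k]"
    and len: "length (sylvester_od_type k) = Suc k"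
    by (simp_all add: sylvester_od_type_def)
  have "(\<Sum>t<Suc k. real ((sylvester_od_type k @ [2^k]) ! t) * (z t)\<^sup>2) =
      (\<Sum>t<Suc k. real (sylvester_od_type k ! t) * (z t)\<^sup>2)"
    by (rule sum.cong) (simp_all add: len nth_append)
  then show ?thesis
    unfolding type_Suc by (simp add: len nth_append del: sum.lessThan_Suc) (simp add: len)
qed

lemma sylvester_pm1: "sylvester k q l \<in> {-1, 1}"
  by (induction k arbitrary: q l) (auto simp: sylvester.simps(2))

lemma sylvester_od_entry: "fst (sylvester_od k q l) \<in> {-1, 1} \<and> snd (sylvester_od k q l) \<le> k"
proof (induction k arbitrary: q l)
  case (Suc k)
  show ?case
    using Suc.IH[of q l] Suc.IH[of "q - 2^k" "l - 2^k"]
      sylvester_pm1[of k q "l - 2^k"] sylvester_pm1[of k "q - 2^k" l]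
    by (auto simp: sylvester_od.simps(2) intro: le_SucI)
qed simp

lemma sum_scaled_products:
  fixes f g :: "nat \<Rightarrow> real"
  shows "(\<Sum>l\<in>A. f l * (c * g l)) = c * (\<Sum>l\<in>A. f l * g l)"
    and "(\<Sum>l\<in>A. (c * f l) * g l) = c * (\<Sum>l\<in>A. f l * g l)"
  by (simp_all add: sum_distrib_left mult_ac)

lemma sylvester_od_orthogonal:
  assumes "q < 2^k" "q' < 2^k"
  shows "(\<Sum>l<2^k. dval (sylvester_od k) z q l * dval (sylvester_od k) z q' l) =
    (if q = q' then (\<Sum>t<length (sylvester_od_type k). real (sylvester_od_type k ! t) * (z t)\<^sup>2) else 0)"
  using assms
proof (induction k arbitrary: q q')
  case 0
  then show ?case by (simp add: dval_def sylvester_od_type_def power2_eq_square)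
next
  case (Suc k)
  from Suc.prems show ?case
    by (cases rule: less_2pow_Suc_pair_cases)
      (use Suc.IH sylvester_amicable in \<open>simp_all add: sum_lessThan_double sylvester_blocks sum_negf
        sum_scaled_products sylvester_od_form_Suc sylvester_orthogonal power2_eq_square[symmetric]
        mult.commute\<close>)
qed

section \<open>Kronecker extension by Sylvester matrices\<close>

text \<open>A design in the variables \<open>x\<^sub>0, \<dots>, x\<^sub>3\<close> is split as \<open>X = A + x\<^sub>3 M\<close>, where \<open>A\<close>
  does not involve \<open>x\<^sub>3\<close> and \<open>M\<close> is the \<open>(0, \<plusminus>1)\<close> coefficient matrix of \<open>x\<^sub>3\<close>.\<close>

definition split_A :: "design \<Rightarrow> (nat \<Rightarrow> real) \<Rightarrow> nat \<Rightarrow> nat \<Rightarrow> real" where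
  "split_A X x r l = (if snd (X r l) < 3 then dval X x r l else 0)"

definition split_M :: "design \<Rightarrow> nat \<Rightarrow> nat \<Rightarrow> real" where
  "split_M X r l = (if snd (X r l) < 3 then 0 else real_of_int (fst (X r l)))"

lemma dval_split:
  assumes "snd (X r l) < 4"
  shows "dval X x r l = split_A X x r l + x 3 * split_M X r l"
proof (cases "snd (X r l) < 3")
  case False
  with assms have "snd (X r l) = 3" by linarith
  then show ?thesis by (simp add: split_A_def split_M_def dval_def)
qed (simp add: split_A_def split_M_def)

lemma split_A_upd_3 [simp]: "split_A X (x(3 := s)) = split_A X x"
  by (simp add: split_A_def dval_def fun_eq_iff)

lemma sum_products_affine:
  fixes A A' M M' :: "nat \<Rightarrow> real"
  shows "(\<Sum>l<m. (A l + s * M l) * (A' l + s * M' l)) =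
    (\<Sum>l<m. A l * A' l) + s * ((\<Sum>l<m. A l * M' l) + (\<Sum>l<m. M l * A' l)) + s\<^sup>2 * (\<Sum>l<m. M l * M' l)"
  by (simp add: sum.distrib sum_distrib_left algebra_simps power2_eq_square)

text \<open>The row products of an \<open>OD(m; c, c, c, w)\<close> form a quadratic polynomial in \<open>x\<^sub>3\<close>;
  comparing its coefficients separates the contributions of \<open>A\<close> and \<open>M\<close>.\<close>

lemma OD_split_products:
  assumes od: "is_OD m [c, c, c, w] X" and r: "r < m" and r': "r' < m"
  shows "(\<Sum>l<m. split_A X x r l * split_A X x r' l) =
      (if r = r' then real c * ((x 0)\<^sup>2 + (x 1)\<^sup>2 + (x 2)\<^sup>2) else 0)"
    and "(\<Sum>l<m. split_M X r l * split_M X r' l) = (if r = r' then real w else 0)"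
    and "(\<Sum>l<m. split_A X x r l * split_M X r' l) + (\<Sum>l<m. split_M X r l * split_A X x r' l) = 0"
proof -
  have wf: "snd (X r l) < 4" "snd (X r' l) < 4" if "l < m" for l
    using od r r' that unfolding is_OD_def wf_design_def by (auto simp: numeral_eq_Suc)
  define AA where "AA = (\<Sum>l<m. split_A X x r l * split_A X x r' l)"
  define AM where "AM = (\<Sum>l<m. split_A X x r l * split_M X r' l) + (\<Sum>l<m. split_M X r l * split_A X x r' l)"
  define MM where "MM = (\<Sum>l<m. split_M X r l * split_M X r' l)"
  define T where "T = (if r = r' then real c * ((x 0)\<^sup>2 + (x 1)\<^sup>2 + (x 2)\<^sup>2) else 0)"
  have poly: "AA + s * AM + s\<^sup>2 * MM = T + (if r = r' then real w * s\<^sup>2 else 0)" for s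
  proof -
    have "AA + s * AM + s\<^sup>2 * MM = (\<Sum>l<m. dval X (x(3 := s)) r l * dval X (x(3 := s)) r' l)"
      unfolding AA_def AM_def MM_def sum_products_affine[symmetric]
      using wf by (intro sum.cong refl) (simp add: dval_split)
    also have "\<dots> = T + (if r = r' then real w * s\<^sup>2 else 0)"
      using od r r' unfolding is_OD_def T_def by (simp add: numeral_eq_Suc algebra_simps)
    finally show ?thesis .
  qed
  from poly[of 0] poly[of 1] poly[of "-1"]
  have "AA = T" "MM = (if r = r' then real w else 0)" "AM = 0"
    by (auto simp: power2_eq_square split: if_splits)
  then show "(\<Sum>l<m. split_A X x r l * split_A X x r' l) =
      (if r = r' then real c * ((x 0)\<^sup>2 + (x 1)\<^sup>2 + (x 2)\<^sup>2) else 0)"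
    and "(\<Sum>l<m. split_M X r l * split_M X r' l) = (if r = r' then real w else 0)"
    and "(\<Sum>l<m. split_A X x r l * split_M X r' l) + (\<Sum>l<m. split_M X r l * split_A X x r' l) = 0"
    unfolding AA_def MM_def AM_def T_def by simp_all
qed

lemma AOD_split_amicable:
  assumes aod: "is_AOD m cs ds X Y" and len: "length cs = 4" and r: "r < m" and r': "r' < m"
  shows "(\<Sum>l<m. split_A X x r l * dval Y y r' l) = (\<Sum>l<m. dval Y y r l * split_A X x r' l)"
    and "(\<Sum>l<m. split_M X r l * dval Y y r' l) = (\<Sum>l<m. dval Y y r l * split_M X r' l)"
proof -
  have wf: "snd (X r l) < 4" "snd (X r' l) < 4" if "l < m" for l
    using aod r r' that len unfolding is_AOD_def is_OD_def wf_design_def by auto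
  have amicable: "(\<Sum>l<m. dval X x' r l * dval Y y r' l) = (\<Sum>l<m. dval Y y r l * dval X x' r' l)" for x'
    using aod r r' unfolding is_AOD_def by blast
  have split: "(\<Sum>l<m. dval X (x(3 := s)) r l * dval Y y r' l) =
      (\<Sum>l<m. split_A X x r l * dval Y y r' l) + s * (\<Sum>l<m. split_M X r l * dval Y y r' l)"
    "(\<Sum>l<m. dval Y y r l * dval X (x(3 := s)) r' l) =
      (\<Sum>l<m. dval Y y r l * split_A X x r' l) + s * (\<Sum>l<m. dval Y y r l * split_M X r' l)" for s
    using wf by (simp_all add: dval_split algebra_simps sum.distrib sum_distrib_left)
  from amicable[of "x(3 := 0)"] show "(\<Sum>l<m. split_A X x r l * dval Y y r' l) = (\<Sum>l<m. dval Y y r l * split_A X x r' l)"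
    unfolding split by simp
  with amicable[of "x(3 := 1)"] show "(\<Sum>l<m. split_M X r l * dval Y y r' l) = (\<Sum>l<m. dval Y y r l * split_M X r' l)"
    unfolding split by simp
qed

text \<open>Both constructions have \<open>2\<^sup>k \<times> 2\<^sup>k\<close> blocks of size \<open>m\<close>: the block \<open>(q, q')\<close> of
  \<open>sylvester_kron_X\<close> is \<open>H\<^bsub>qq'\<^esub> A + D\<^bsub>qq'\<^esub> M\<close>, with \<open>D = D\<^sub>k\<close> in the variables
  \<open>x\<^sub>3, \<dots>, x\<^bsub>3+k\<^esub>\<close>, and that of \<open>sylvester_kron_Y\<close> is \<open>H\<^bsub>qq'\<^esub> Y\<close>.\<close>

definition sylvester_kron_X :: "nat \<Rightarrow> nat \<Rightarrow> design \<Rightarrow> design" where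
  "sylvester_kron_X m k X i j =
     (if snd (X (i mod m) (j mod m)) < 3
      then (fst (X (i mod m) (j mod m)) * sylvester k (i div m) (j div m), snd (X (i mod m) (j mod m)))
      else (fst (X (i mod m) (j mod m)) * fst (sylvester_od k (i div m) (j div m)),
            3 + snd (sylvester_od k (i div m) (j div m))))"

definition sylvester_kron_Y :: "nat \<Rightarrow> nat \<Rightarrow> design \<Rightarrow> design" where
  "sylvester_kron_Y m k Y i j =
     (fst (Y (i mod m) (j mod m)) * sylvester k (i div m) (j div m), snd (Y (i mod m) (j mod m)))"

lemma dval_sylvester_kron_X:
  "dval (sylvester_kron_X m k X) x i j =
    split_A X x (i mod m) (j mod m) * of_int (sylvester k (i div m) (j div m)) +
    split_M X (i mod m) (j mod m) * dval (sylvester_od k) (\<lambda>t. x (3 + t)) (i div m) (j div m)"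
  by (simp add: sylvester_kron_X_def dval_def split_A_def split_M_def)

lemma dval_sylvester_kron_Y:
  "dval (sylvester_kron_Y m k Y) y i j = dval Y y (i mod m) (j mod m) * of_int (sylvester k (i div m) (j div m))"
  by (simp add: sylvester_kron_Y_def dval_def)

lemma sum_lessThan_mult_div_mod:
  fixes F :: "nat \<Rightarrow> nat \<Rightarrow> 'a::comm_monoid_add"
  assumes "0 < m"
  shows "(\<Sum>l<a * m. F (l div m) (l mod m)) = (\<Sum>q<a. \<Sum>r<m. F q r)"
  using assms by (simp add: sum_lessThan_mult_split)

lemma sum_kron_product:
  fixes f f' g g' :: "nat \<Rightarrow> real"
  shows "(\<Sum>q<a. \<Sum>r<m. (f r * g q) * (f' r * g' q)) = (\<Sum>r<m. f r * f' r) * (\<Sum>q<a. g q * g' q)"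
  by (simp add: sum_distrib_left sum_distrib_right mult_ac)

lemma sum_kron_product_2:
  fixes A M A' M' H D H' D' :: "nat \<Rightarrow> real"
  shows "(\<Sum>q<a. \<Sum>r<m. (A r * H q + M r * D q) * (A' r * H' q + M' r * D' q)) =
    (\<Sum>r<m. A r * A' r) * (\<Sum>q<a. H q * H' q) + (\<Sum>r<m. M r * M' r) * (\<Sum>q<a. D q * D' q) +
    (\<Sum>r<m. A r * M' r) * (\<Sum>q<a. H q * D' q) + (\<Sum>r<m. M r * A' r) * (\<Sum>q<a. D q * H' q)"
  by (simp add: distrib_left distrib_right sum.distrib sum_kron_product[symmetric])

lemma sum_lessThan_add:
  fixes f :: "nat \<Rightarrow> 'a::comm_monoid_add"
  shows "(\<Sum>t<a + b. f t) = (\<Sum>t<a. f t) + (\<Sum>t<b. f (a + t))"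
  by (induction b) (simp_all add: add.assoc)

definition sylvester_kron_type :: "nat \<Rightarrow> nat \<Rightarrow> nat \<Rightarrow> nat list" where
  "sylvester_kron_type c w k = [c * 2^k, c * 2^k, c * 2^k] @ map ((*) w) (sylvester_od_type k)"

lemma sylvester_kron_type_form:
  "(\<Sum>t<length (sylvester_kron_type c w k). real (sylvester_kron_type c w k ! t) * (x t)\<^sup>2) =
    2^k * (real c * ((x 0)\<^sup>2 + (x 1)\<^sup>2 + (x 2)\<^sup>2)) +
    real w * (\<Sum>t<length (sylvester_od_type k). real (sylvester_od_type k ! t) * (x (3 + t))\<^sup>2)"
proof -
  have len: "length (sylvester_kron_type c w k) = 3 + length (sylvester_od_type k)"
    by (simp add: sylvester_kron_type_def)
  have head: "(\<Sum>t<3. real (sylvester_kron_type c w k ! t) * (x t)\<^sup>2) =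
      2^k * (real c * ((x 0)\<^sup>2 + (x 1)\<^sup>2 + (x 2)\<^sup>2))"
    by (simp add: sylvester_kron_type_def numeral_eq_Suc algebra_simps)
  have tail: "(\<Sum>t<length (sylvester_od_type k). real (sylvester_kron_type c w k ! (3 + t)) * (x (3 + t))\<^sup>2) =
      real w * (\<Sum>t<length (sylvester_od_type k). real (sylvester_od_type k ! t) * (x (3 + t))\<^sup>2)"
    by (simp add: sylvester_kron_type_def sum_distrib_left mult.assoc)
  show ?thesis
    unfolding len sum_lessThan_add head tail ..
qed

lemma sylvester_kron_X_wf:
  assumes "wf_design m 4 X" "0 < m"
  shows "wf_design (2^k * m) (length (sylvester_kron_type c w k)) (sylvester_kron_X m k X)"
  unfolding wf_design_def
proof (intro allI impI)
  fix i j assume "i < 2^k * m" "j < 2^k * m"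
  have "fst (X (i mod m) (j mod m)) \<in> {-1, 0, 1}" "snd (X (i mod m) (j mod m)) < 4"
    using assms unfolding wf_design_def by simp_all
  then show "fst (sylvester_kron_X m k X i j) \<in> {-1, 0, 1} \<and>
      snd (sylvester_kron_X m k X i j) < length (sylvester_kron_type c w k)"
    using sylvester_pm1[of k "i div m" "j div m"] sylvester_od_entry[of k "i div m" "j div m"]
    by (auto simp: sylvester_kron_X_def sylvester_kron_type_def sylvester_od_type_def)
qed

lemma sylvester_kron_Y_wf:
  assumes "wf_design m n Y" "0 < m"
  shows "wf_design (2^k * m) n (sylvester_kron_Y m k Y)"
  unfolding wf_design_def
proof (intro allI impI)
  fix i j assume "i < 2^k * m" "j < 2^k * m"
  have "fst (Y (i mod m) (j mod m)) \<in> {-1, 0, 1}" "snd (Y (i mod m) (j mod m)) < n"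
    using assms unfolding wf_design_def by simp_all
  then show "fst (sylvester_kron_Y m k Y i j) \<in> {-1, 0, 1} \<and> snd (sylvester_kron_Y m k Y i j) < n"
    using sylvester_pm1[of k "i div m" "j div m"] by (auto simp: sylvester_kron_Y_def)
qed

lemma full_design_sylvester_kron:
  assumes "full_design m X" "full_design m Y" "0 < m"
  shows "full_design (2^k * m) (sylvester_kron_X m k X)" "full_design (2^k * m) (sylvester_kron_Y m k Y)"
proof -
  have "sylvester k q l \<noteq> 0" "fst (sylvester_od k q l) \<noteq> 0" for q l
    using sylvester_pm1[of k q l] sylvester_od_entry[of k q l] by auto
  then show "full_design (2^k * m) (sylvester_kron_X m k X)" "full_design (2^k * m) (sylvester_kron_Y m k Y)"
    using assms unfolding full_design_def sylvester_kron_X_def sylvester_kron_Y_def by simp_all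
qed

context
  fixes m c w :: nat and X Y :: design
  assumes aod: "is_AOD m [c, c, c, w] [c, c, c, w] X Y" and m: "0 < m"
begin

lemma kron_indices:
  assumes "i < 2^k * m"
  shows "i div m < 2^k" "i mod m < m"
  using assms m by (simp_all add: div_less_iff_less_mult mult.commute)

lemma is_OD_sylvester_kron_X: "is_OD (2^k * m) (sylvester_kron_type c w k) (sylvester_kron_X m k X)"
  unfolding is_OD_def
proof (intro conjI allI impI)
  have odX: "is_OD m [c, c, c, w] X"
    using aod by (simp add: is_AOD_def)
  then show "wf_design (2^k * m) (length (sylvester_kron_type c w k)) (sylvester_kron_X m k X)"
    using m by (intro sylvester_kron_X_wf) (simp_all add: is_OD_def numeral_eq_Suc)
  fix x :: "nat \<Rightarrow> real" and i j assume i: "i < 2^k * m" and j: "j < 2^k * m"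
  let ?r = "i mod m" and ?r' = "j mod m" and ?q = "i div m" and ?q' = "j div m"
  let ?A = "split_A X x" and ?M = "split_M X" and ?H = "\<lambda>q l. real_of_int (sylvester k q l)"
    and ?D = "dval (sylvester_od k) (\<lambda>t. x (3 + t))"
  note idx = kron_indices[OF i] kron_indices[OF j]
  have "(\<Sum>l<2^k * m. dval (sylvester_kron_X m k X) x i l * dval (sylvester_kron_X m k X) x j l) =
      (\<Sum>q<2^k. \<Sum>r<m. (?A ?r r * ?H ?q q + ?M ?r r * ?D ?q q) * (?A ?r' r * ?H ?q' q + ?M ?r' r * ?D ?q' q))"
    unfolding dval_sylvester_kron_X by (rule sum_lessThan_mult_div_mod[OF m])
  also have "\<dots> = (\<Sum>r<m. ?A ?r r * ?A ?r' r) * (\<Sum>q<2^k. ?H ?q q * ?H ?q' q) +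
      (\<Sum>r<m. ?M ?r r * ?M ?r' r) * (\<Sum>q<2^k. ?D ?q q * ?D ?q' q) +
      ((\<Sum>r<m. ?A ?r r * ?M ?r' r) + (\<Sum>r<m. ?M ?r r * ?A ?r' r)) * (\<Sum>q<2^k. ?H ?q q * ?D ?q' q)"
    unfolding sum_kron_product_2
    using sylvester_amicable[OF idx(1) idx(3)] by (simp add: algebra_simps)
  also have "\<dots> = (if ?r = ?r' then real c * ((x 0)\<^sup>2 + (x 1)\<^sup>2 + (x 2)\<^sup>2) else 0) * (if ?q = ?q' then 2^k else 0) +
      (if ?r = ?r' then real w else 0) *
      (if ?q = ?q' then \<Sum>t<length (sylvester_od_type k). real (sylvester_od_type k ! t) * (x (3 + t))\<^sup>2 else 0)"
    using OD_split_products[OF odX idx(2) idx(4)] sylvester_orthogonal[OF idx(1) idx(3)]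
      sylvester_od_orthogonal[OF idx(1) idx(3)] by simp
  also have "\<dots> = (if i = j then \<Sum>t<length (sylvester_kron_type c w k).
      real (sylvester_kron_type c w k ! t) * (x t)\<^sup>2 else 0)"
    unfolding sylvester_kron_type_form nat_eq_iff_div_mod[of i j m] by (auto simp: algebra_simps)
  finally show "(\<Sum>l<2^k * m. dval (sylvester_kron_X m k X) x i l * dval (sylvester_kron_X m k X) x j l) =
      (if i = j then \<Sum>t<length (sylvester_kron_type c w k). real (sylvester_kron_type c w k ! t) * (x t)\<^sup>2 else 0)" .
qed

lemma is_OD_sylvester_kron_Y:
  "is_OD (2^k * m) [c * 2^k, c * 2^k, c * 2^k, w * 2^k] (sylvester_kron_Y m k Y)"
  unfolding is_OD_def
proof (intro conjI allI impI)
  have odY: "is_OD m [c, c, c, w] Y"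
    using aod by (simp add: is_AOD_def)
  then show "wf_design (2^k * m) (length [c * 2^k, c * 2^k, c * 2^k, w * 2^k]) (sylvester_kron_Y m k Y)"
    using m by (intro sylvester_kron_Y_wf) (simp_all add: is_OD_def)
  fix y :: "nat \<Rightarrow> real" and i j assume i: "i < 2^k * m" and j: "j < 2^k * m"
  let ?r = "i mod m" and ?r' = "j mod m" and ?q = "i div m" and ?q' = "j div m"
  note idx = kron_indices[OF i] kron_indices[OF j]
  let ?H = "\<lambda>q l. real_of_int (sylvester k q l)"
  have "(\<Sum>l<2^k * m. dval (sylvester_kron_Y m k Y) y i l * dval (sylvester_kron_Y m k Y) y j l) =
      (\<Sum>q<2^k. \<Sum>r<m. (dval Y y ?r r * ?H ?q q) * (dval Y y ?r' r * ?H ?q' q))"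
    unfolding dval_sylvester_kron_Y by (rule sum_lessThan_mult_div_mod[OF m])
  also have "\<dots> = (\<Sum>r<m. dval Y y ?r r * dval Y y ?r' r) * (\<Sum>q<2^k. ?H ?q q * ?H ?q' q)"
    by (rule sum_kron_product)
  also have "\<dots> = (if ?r = ?r' then real c * ((y 0)\<^sup>2 + (y 1)\<^sup>2 + (y 2)\<^sup>2) + real w * (y 3)\<^sup>2 else 0) *
      (if ?q = ?q' then 2^k else 0)"
  proof -
    have "(\<Sum>l<m. dval Y y ?r l * dval Y y ?r' l) =
        (if ?r = ?r' then real c * ((y 0)\<^sup>2 + (y 1)\<^sup>2 + (y 2)\<^sup>2) + real w * (y 3)\<^sup>2 else 0)"
      using odY idx unfolding is_OD_def by (simp add: numeral_eq_Suc algebra_simps)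
    then show ?thesis
      using sylvester_orthogonal[OF idx(1) idx(3)] by simp
  qed
  also have "\<dots> = (if i = j then \<Sum>t<length [c * 2^k, c * 2^k, c * 2^k, w * 2^k].
      real ([c * 2^k, c * 2^k, c * 2^k, w * 2^k] ! t) * (y t)\<^sup>2 else 0)"
    unfolding nat_eq_iff_div_mod[of i j m] by (auto simp: numeral_eq_Suc algebra_simps)
  finally show "(\<Sum>l<2^k * m. dval (sylvester_kron_Y m k Y) y i l * dval (sylvester_kron_Y m k Y) y j l) =
      (if i = j then \<Sum>t<length [c * 2^k, c * 2^k, c * 2^k, w * 2^k].
        real ([c * 2^k, c * 2^k, c * 2^k, w * 2^k] ! t) * (y t)\<^sup>2 else 0)" .
qed

lemma sylvester_kron_amicable:
  assumes i: "i < 2^k * m" and j: "j < 2^k * m"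
  shows "(\<Sum>l<2^k * m. dval (sylvester_kron_X m k X) x i l * dval (sylvester_kron_Y m k Y) y j l) =
    (\<Sum>l<2^k * m. dval (sylvester_kron_Y m k Y) y i l * dval (sylvester_kron_X m k X) x j l)"
proof -
  let ?r = "i mod m" and ?r' = "j mod m" and ?q = "i div m" and ?q' = "j div m"
  let ?A = "split_A X x" and ?M = "split_M X" and ?Y = "dval Y y" and ?H = "\<lambda>q l. real_of_int (sylvester k q l)"
    and ?D = "dval (sylvester_od k) (\<lambda>t. x (3 + t))"
  note idx = kron_indices[OF i] kron_indices[OF j]
  have DH: "(\<Sum>q<2^k. ?D ?q q * ?H ?q' q) = (\<Sum>q<2^k. ?H ?q q * ?D ?q' q)"
    using sylvester_amicable[OF idx(3) idx(1)] by (simp add: mult.commute)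
  have "(\<Sum>l<2^k * m. dval (sylvester_kron_X m k X) x i l * dval (sylvester_kron_Y m k Y) y j l) =
      (\<Sum>q<2^k. \<Sum>r<m. (?A ?r r * ?H ?q q + ?M ?r r * ?D ?q q) * (?Y ?r' r * ?H ?q' q))"
    unfolding dval_sylvester_kron_X dval_sylvester_kron_Y by (rule sum_lessThan_mult_div_mod[OF m])
  also have "\<dots> = (\<Sum>r<m. ?A ?r r * ?Y ?r' r) * (\<Sum>q<2^k. ?H ?q q * ?H ?q' q) +
      (\<Sum>r<m. ?M ?r r * ?Y ?r' r) * (\<Sum>q<2^k. ?D ?q q * ?H ?q' q)"
    using sum_kron_product_2[where M' = "\<lambda>_. 0"] by simp
  also have "\<dots> = (\<Sum>r<m. ?Y ?r r * ?A ?r' r) * (\<Sum>q<2^k. ?H ?q q * ?H ?q' q) +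
      (\<Sum>r<m. ?Y ?r r * ?M ?r' r) * (\<Sum>q<2^k. ?H ?q q * ?D ?q' q)"
    using AOD_split_amicable[OF aod _ idx(2) idx(4)] DH by simp
  also have "\<dots> = (\<Sum>q<2^k. \<Sum>r<m. (?Y ?r r * ?H ?q q) * (?A ?r' r * ?H ?q' q + ?M ?r' r * ?D ?q' q))"
    using sum_kron_product_2[where M = "\<lambda>_. 0"] by simp
  also have "\<dots> = (\<Sum>l<2^k * m. dval (sylvester_kron_Y m k Y) y i l * dval (sylvester_kron_X m k X) x j l)"
    unfolding dval_sylvester_kron_X dval_sylvester_kron_Y by (rule sum_lessThan_mult_div_mod[OF m, symmetric])
  finally show ?thesis .
qed

lemma is_AOD_sylvester_kron:
  "is_AOD (2^k * m) (sylvester_kron_type c w k) [c * 2^k, c * 2^k, c * 2^k, w * 2^k]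
    (sylvester_kron_X m k X) (sylvester_kron_Y m k Y)"
  unfolding is_AOD_def
  using is_OD_sylvester_kron_X is_OD_sylvester_kron_Y sylvester_kron_amicable by blast

end

lemma exists_full_AOD_sylvester_kron:
  assumes "exists_full_AOD m [c, c, c, w] [c, c, c, w]" "0 < m"
  shows "exists_full_AOD (2^k * m) (sylvester_kron_type c w k) [c * 2^k, c * 2^k, c * 2^k, w * 2^k]"
  using assms is_AOD_sylvester_kron full_design_sylvester_kron unfolding exists_full_AOD_def by blast

lemma sylvester_kron_type_eq:
  assumes "1 \<le> k"
  shows "sylvester_kron_type c (2 * u) k =
    [c * 2^k, c * 2^k, c * 2^k, 2 * u, 2 * u] @ map (\<lambda>j. u * 2^j) [2..<Suc k]"
proof -
  have "[2..<Suc k] = map Suc [1..<k]"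
    by (simp add: map_Suc_upt numeral_2_eq_2)
  then have "map (\<lambda>j. u * 2^j) [2..<Suc k] = map (\<lambda>t. 2 * u * 2^t) [1..<k]"
    by simp
  moreover have "[0..<k] = 0 # [1..<k]"
    using assms by (simp add: upt_conv_Cons)
  ultimately show ?thesis
    by (simp add: sylvester_kron_type_def sylvester_od_type_def)
qed

lemma exists_full_AOD_family:
  assumes "exists_full_AOD m [c, c, c, 2 * u] [c, c, c, 2 * u]" "0 < m" "1 \<le> k"
  shows "exists_full_AOD (2^k * m)
    ([c * 2^k, c * 2^k, c * 2^k, 2 * u, 2 * u] @ map (\<lambda>j. u * 2^j) [2..<Suc k])
    [c * 2^k, c * 2^k, c * 2^k, u * 2^Suc k]"
  using exists_full_AOD_sylvester_kron[OF assms(1,2), of k] sylvester_kron_type_eq[OF assms(3)]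
  by (simp add: mult_ac)

lemma exists_full_AOD_2pow:
  assumes "4 < n"
  shows "exists_full_AOD (2^n)
    ([2^(n-3), 2^(n-3), 2^(n-3), 10, 10] @ map (\<lambda>j. 5 * 2^j) [2..<n-3])
    [2^(n-3), 2^(n-3), 2^(n-3), 5 * 2^(n-3)]"
proof -
  define k where "k = n - 4"
  have n: "n = k + 4" and k: "1 \<le> k"
    using assms by (simp_all add: k_def)
  have "exists_full_AOD (2^k * 16)
      ([2 * 2^k, 2 * 2^k, 2 * 2^k, 2 * 5, 2 * 5] @ map (\<lambda>j. 5 * 2^j) [2..<Suc k])
      [2 * 2^k, 2 * 2^k, 2 * 2^k, 5 * 2^Suc k]"
    using exists_full_AOD_16 k by (intro exists_full_AOD_family) simp_all
  then show ?thesis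
    unfolding n by (simp add: power_add mult.commute)
qed

lemma exists_full_AOD_3_2pow:
  assumes "3 < n"
  shows "exists_full_AOD (3 * 2^n)
    ([2^(n-2), 2^(n-2), 2^(n-2), 18, 18] @ map (\<lambda>j. 9 * 2^j) [2..<n-2])
    [2^(n-2), 2^(n-2), 2^(n-2), 9 * 2^(n-2)]"
proof -
  define k where "k = n - 3"
  have n: "n = k + 3" and k: "1 \<le> k"
    using assms by (simp_all add: k_def)
  have "exists_full_AOD (2^k * 24)
      ([2 * 2^k, 2 * 2^k, 2 * 2^k, 2 * 9, 2 * 9] @ map (\<lambda>j. 9 * 2^j) [2..<Suc k])
      [2 * 2^k, 2 * 2^k, 2 * 2^k, 9 * 2^Suc k]"
    using exists_full_AOD_24 k by (intro exists_full_AOD_family) simp_all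
  then show ?thesis
    unfolding n by (simp add: power_add mult.commute)
qed

theorem mainTheorem6:
  shows "exists_full_AOD 16 [2,2,2,10] [2,2,2,10]
    \<and> exists_full_AOD 24 [2,2,2,18] [2,2,2,18]
    \<and> (\<forall>n::nat. n > 4 \<longrightarrow>
          exists_full_AOD (2^n)
            ([2^(n-3), 2^(n-3), 2^(n-3), 10, 10] @ map (\<lambda>j. 5 * 2^j) [2..<n-3])
            [2^(n-3), 2^(n-3), 2^(n-3), 5 * 2^(n-3)])
    \<and> (\<forall>n::nat. n > 3 \<longrightarrow>
          exists_full_AOD (3 * 2^n)
            ([2^(n-2), 2^(n-2), 2^(n-2), 18, 18] @ map (\<lambda>j. 9 * 2^j) [2..<n-2])
            [2^(n-2), 2^(n-2), 2^(n-2), 9 * 2^(n-2)])"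
  using exists_full_AOD_16 exists_full_AOD_24 exists_full_AOD_2pow exists_full_AOD_3_2pow by blast

end
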